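(* Let $a,b,c,e\in\mathbb Z$ with $a\neq0$, $e>0$, such that $h_3(j)=aj^3+bj^2+cj+e$ satisfies $h_3(j)\ge0$ for all integers $j\ge0$ (so $h_3\in\mathcal H_0$). Let $\alpha=a/e$, $\beta=b/e$, $\gamma=c/e$ and $$f(x)=\tfrac12x^2-\left(\alpha+\beta+\gamma+\tfrac32\right)x+(9\alpha+5\beta+3\gamma+2).$$ Assume $\alpha+\beta+\gamma\ge 2$. If there exists an integer $d$ with $3\le d\le c(h_3)+1$ and $f(d)<0$, then $\operatorname{hdepth}(h_3)<d$.
   Context: Let $\mathcal H_0$ denote the set of functions $h:\mathbb Z_{\ge 0}\to\mathbb Z_{\ge 0}$ with $h(0)>0$. For $h\in\mathcal H_0$ and integers $0\le k\le d$, put $\beta_k^d(h)=\sum_{j=0}^k(-1)^{k-j}\binom{d-j}{k-j}h(j)$. The Hilbert depth of $h$ is $\operatorname{hdepth}(h)=\max\{d\in\mathbb Z_{\ge0}:\ \beta_k^d(h)\ge 0\text{ for all }0\le k\le d\}$; this set contains $d=0$ and is known to be bounded above by $c(h):=\lfloor h(1)/h(0)\rfloor$, so the maximum exists. *)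

theory Defs
  imports Complex_Main
begin

definition in_H0 :: "(nat \<Rightarrow> int) \<Rightarrow> bool" where
  "in_H0 h \<longleftrightarrow> (\<forall>j. h j \<ge> 0) \<and> h 0 > 0"

definition hbeta :: "nat \<Rightarrow> nat \<Rightarrow> (nat \<Rightarrow> int) \<Rightarrow> int" where
  "hbeta k d h = (\<Sum>j=0..k. (-1) ^ (k - j) * int ((d - j) choose (k - j)) * h j)"

definition hdepth :: "(nat \<Rightarrow> int) \<Rightarrow> nat" where
  "hdepth h = (GREATEST d. \<forall>k\<le>d. hbeta k d h \<ge> 0)"

definition cbound :: "(nat \<Rightarrow> int) \<Rightarrow> int" where
  "cbound h = \<lfloor>real_of_int (h 1) / real_of_int (h 0)\<rfloor>"

end

theory Submission imports Defs begin

text \<open>Pascal's rule gives beta_k^d = beta_k^(d+1) + beta_(k-1)^d, so every beta_k^d is a partial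
  sum of the beta_i^(d+1), and the condition defining the Hilbert depth is downward closed in d.
  Hence d \<le> hdepth h forces beta_2^d(h) \<ge> 0, while for the cubic h one has
  2 beta_2^d(h) = 2 e f(d). Only this coefficient is used.\<close>

lemma hbeta_0 [simp]: "hbeta 0 d h = h 0"
  by (simp add: hbeta_def)

lemma hbeta_Suc_Suc:
  assumes "Suc k \<le> d"
  shows "hbeta (Suc k) (Suc d) h = hbeta (Suc k) d h - hbeta k d h"
proof -
  have pascal: "(-1) ^ (Suc k - j) * int ((Suc d - j) choose (Suc k - j)) * h j
      = (-1) ^ (Suc k - j) * int ((d - j) choose (Suc k - j)) * h j
        - (-1) ^ (k - j) * int ((d - j) choose (k - j)) * h j" if "j \<in> {0..k}" for j
    using that assms by (simp add: Suc_diff_le algebra_simps)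
  have "hbeta (Suc k) (Suc d) h
      = (\<Sum>j=0..k. (-1) ^ (Suc k - j) * int ((Suc d - j) choose (Suc k - j)) * h j) + h (Suc k)"
    by (simp add: hbeta_def)
  also have "\<dots> = (\<Sum>j=0..k. (-1) ^ (Suc k - j) * int ((d - j) choose (Suc k - j)) * h j)
      + h (Suc k) - hbeta k d h"
    by (simp only: sum.cong[OF refl pascal] sum_subtractf hbeta_def)
  also have "\<dots> = hbeta (Suc k) d h - hbeta k d h"
    by (simp add: hbeta_def)
  finally show ?thesis .
qed

lemma hbeta_eq_sum_hbeta_Suc:
  "k \<le> d \<Longrightarrow> hbeta k d h = (\<Sum>i\<le>k. hbeta i (Suc d) h)"
proof (induction k)
  case (Suc k)
  then show ?case using hbeta_Suc_Suc[of k d h] by simp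
qed simp

lemma hbeta_nonneg_Suc_imp:
  assumes "\<forall>k\<le>Suc d. hbeta k (Suc d) h \<ge> 0"
  shows "\<forall>k\<le>d. hbeta k d h \<ge> 0"
proof (intro allI impI)
  fix k assume "k \<le> d"
  then have "hbeta k d h = (\<Sum>i\<le>k. hbeta i (Suc d) h)"
    by (rule hbeta_eq_sum_hbeta_Suc)
  also have "\<dots> \<ge> 0"
    using \<open>k \<le> d\<close> assms by (intro sum_nonneg) simp
  finally show "hbeta k d h \<ge> 0" .
qed

lemma hbeta_nonneg_mono:
  "d \<le> d' \<Longrightarrow> \<forall>k\<le>d'. hbeta k d' h \<ge> 0 \<Longrightarrow> \<forall>k\<le>d. hbeta k d h \<ge> 0"
  by (induction rule: inc_induct) (use hbeta_nonneg_Suc_imp in blast)+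

lemma hbeta_1: "hbeta 1 d h = h 1 - int d * h 0"
  by (simp add: hbeta_def)

lemma hbeta_nonneg_imp_le:
  assumes "h 0 > 0" and "\<forall>k\<le>d. hbeta k d h \<ge> 0"
  shows "d \<le> nat (h 1)"
proof (cases "d = 0")
  case False
  then have "hbeta 1 d h \<ge> 0"
    using assms(2) by simp
  then have "int d * h 0 \<le> h 1"
    using hbeta_1[of d h] by linarith
  moreover have "int d \<le> int d * h 0"
    using assms(1) by (simp add: mult_le_cancel_left1)
  ultimately show ?thesis by linarith
qed simp

lemma le_hdepth_iff:
  assumes "h 0 > 0"
  shows "d \<le> hdepth h \<longleftrightarrow> (\<forall>k\<le>d. hbeta k d h \<ge> 0)"
proof
  have "\<forall>k\<le>hdepth h. hbeta k (hdepth h) h \<ge> 0"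
    unfolding hdepth_def
    by (rule GreatestI_nat[where k = 0 and b = "nat (h 1)"])
       (use assms hbeta_nonneg_imp_le in auto)
  then show "\<forall>k\<le>d. hbeta k d h \<ge> 0" if "d \<le> hdepth h"
    using hbeta_nonneg_mono that by blast
  show "d \<le> hdepth h" if "\<forall>k\<le>d. hbeta k d h \<ge> 0"
    unfolding hdepth_def
    by (rule Greatest_le_nat[where b = "nat (h 1)"]) (use that assms hbeta_nonneg_imp_le in auto)
qed

lemma hbeta_2: "hbeta 2 d h = h 2 - int (d - 1) * h 1 + int (d choose 2) * h 0"
proof -
  have "{0..2::nat} = {0, 1, 2}" by auto
  then show ?thesis by (simp add: hbeta_def)
qed

lemma hbeta_2_cubic:
  fixes a b c e :: int
  assumes "d \<ge> 1"
  shows "2 * hbeta 2 d (\<lambda>j. a * int j ^ 3 + b * int j ^ 2 + c * int j + e)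
    = e * int d ^ 2 - (2 * a + 2 * b + 2 * c + 3 * e) * int d + (18 * a + 10 * b + 6 * c + 4 * e)"
proof -
  have "2 * (d choose 2) = d * (d - 1)"
    by (cases d) (simp_all add: choose_two even_two_times_div_two)
  then have choose: "2 * int (d choose 2) = int d * (int d - 1)"
    using assms by (metis of_nat_1 of_nat_diff of_nat_mult of_nat_numeral)
  have "2 * hbeta 2 d (\<lambda>j. a * int j ^ 3 + b * int j ^ 2 + c * int j + e)
      = 2 * (8 * a + 4 * b + 2 * c + e) - 2 * (int d - 1) * (a + b + c + e)
        + (2 * int (d choose 2)) * e"
    using assms by (simp add: hbeta_2 of_nat_diff algebra_simps)
  also have "\<dots> = e * int d ^ 2 - (2 * a + 2 * b + 2 * c + 3 * e) * int d
      + (18 * a + 10 * b + 6 * c + 4 * e)"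
    unfolding choose by (simp add: power2_eq_square algebra_simps)
  finally show ?thesis .
qed

theorem lemma3p2:
  fixes a b c e :: int and d :: int
  assumes "a \<noteq> 0" and "e > 0"
    and "\<forall>j::nat. a * int j ^ 3 + b * int j ^ 2 + c * int j + e \<ge> 0"
    and "real_of_int a / real_of_int e + real_of_int b / real_of_int e
           + real_of_int c / real_of_int e \<ge> 2"
    and "3 \<le> d"
    and "d \<le> cbound (\<lambda>j. a * int j ^ 3 + b * int j ^ 2 + c * int j + e) + 1"
    and "(let \<alpha> = real_of_int a / real_of_int e; \<beta> = real_of_int b / real_of_int e;
              \<gamma> = real_of_int c / real_of_int e; x = real_of_int d
          in x ^ 2 / 2 - (\<alpha> + \<beta> + \<gamma> + 3 / 2) * x + (9 * \<alpha> + 5 * \<beta> + 3 * \<gamma> + 2)) < 0"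
  shows "int (hdepth (\<lambda>j. a * int j ^ 3 + b * int j ^ 2 + c * int j + e)) < d"
proof (rule ccontr)
  let ?f = "(let \<alpha> = real_of_int a / real_of_int e; \<beta> = real_of_int b / real_of_int e;
          \<gamma> = real_of_int c / real_of_int e; x = real_of_int d
        in x ^ 2 / 2 - (\<alpha> + \<beta> + \<gamma> + 3 / 2) * x + (9 * \<alpha> + 5 * \<beta> + 3 * \<gamma> + 2))"
  define h where "h = (\<lambda>j::nat. a * int j ^ 3 + b * int j ^ 2 + c * int j + e)"
  assume "\<not> ?thesis"
  then have "nat d \<le> hdepth h" unfolding h_def by linarith
  then have "hbeta 2 (nat d) h \<ge> 0"
    using le_hdepth_iff[of h] assms(2,5) by (simp add: h_def)
  moreover have "hbeta 2 (nat d) h * 2 = e * d ^ 2 - (2 * a + 2 * b + 2 * c + 3 * e) * d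
      + (18 * a + 10 * b + 6 * c + 4 * e)"
    using hbeta_2_cubic[of "nat d" a b c e] assms(5) unfolding h_def by (simp add: Suc_le_eq)
  moreover have "real_of_int (e * d ^ 2 - (2 * a + 2 * b + 2 * c + 3 * e) * d
      + (18 * a + 10 * b + 6 * c + 4 * e))
    = 2 * real_of_int e * ?f"
    using assms(2) by (simp add: Let_def field_simps)
  moreover have "2 * real_of_int e * ?f < 0"
    using assms(2,7) by (simp add: mult_pos_neg)
  ultimately show False
    by linarith
qed

end
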